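(* Let $\alpha$ be a hybrid program, $S\subseteq \mathrm{VAR}(\alpha)$ a set of sensor variables, and $o_1,o_2:S\to\mathbb{R}_{\ge0}$ offset functions with $o_1(s)\le o_2(s)$ for all $s\in S$. Let $r,r_1,r_2\in\mathbb{R}$ and formulas $\phi_{pre},\phi_{post}$ be such that $\alpha$ is forward $r$-safe, $\alpha_{S,o_1}$ is forward $r_1$-safe, and $\alpha_{S,o_2}$ is forward $r_2$-safe, each for $\phi_{pre}$ and $\phi_{post}$. Then $r_2\le r_1\le r$.
   Context: Fix a set $V$ of real-valued variables; a state is a map $\omega:V\to\mathbb{R}$, $\mathcal{S}$ the set of states. Hybrid programs: $x:=\theta$, $x:=*$, $x'=\theta\,\&\,Q$, $?\phi$, $\alpha;\beta$, $\alpha\cup\beta$, $\alpha^*$, with the standard relational semantics $[\![\alpha]\!]\subseteq\mathcal{S}\times\mathcal{S}$ of differential dynamic logic (assignment updates one variable; $x:=*$ sets $x$ to an arbitrary real; $x'=\theta\,\&\,Q$ follows a solution of the ODE for some duration $r\ge0$ staying in $[\![Q]\!]$ throughout; test, relational composition, union, reflexive-transitive closure). Formulas of dL (comparisons, $\neg,\wedge,\forall$, $[\alpha]\phi$) have semantics $[\![\phi]\!]\subseteq\mathcal{S}$. $[\![\mathrm{SP}(\alpha,\phi)]\!]=\{\nu\mid\exists\omega\in[\![\phi]\!],(\omega,\nu)\in[\![\alpha]\!]\}$. $\mathrm{VAR}(\alpha)$ is the set of variables of $\alpha$ (its free and bound variables). Distance: $d(\omega,\nu)=\sqrt{\sum_{x\in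 V}(\omega(x)-\nu(x))^2}$; for $X\subseteq\mathcal{S}$, $\mathrm{Dist}(\omega,X)=\inf\{d(\omega,\nu)\mid\nu\notin X\}$ if $\omega\in X$ and $-\inf\{d(\omega,\nu)\mid\nu\in X\}$ if $\omega\notin X$ (infima in $\mathbb{R}\cup\{\pm\infty\}$, $\inf\emptyset=\infty$). $\alpha$ is forward $r$-safe for $\phi_{pre}$ and $\phi_{post}$ if $r=\inf\{\mathrm{Dist}(\nu,[\![\phi_{post}]\!])\mid\nu\in[\![\mathrm{SP}(\alpha,\phi_{pre})]\!]\}$. Sensor modeling: each sensor variable $q_s$ has an associated physical variable $q_p$, and (modeling convention) sensor reads are assignments $q_s:=q_p$. Bounded sensor attack: for $S\subseteq\mathrm{VAR}(\alpha)$ and $o:S\to\mathbb{R}_{\ge0}$, $\alpha_{S,o}$ is the program obtained from $\alpha$ by replacing every assignment to a variable $q_s\in S$ with $q_s:=*\,;\ ?(q_s\ge q_p-o(q_s)\wedge q_s\le q_p+o(q_s))$. *)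

theory Defs
  imports "HOL-Analysis.Analysis" "HOL-Library.Extended_Real"
begin

type_synonym 'v state = "'v \<Rightarrow> real"

datatype 'v trm =
    Var 'v
  | Const real
  | Neg "'v trm"
  | Plus "'v trm" "'v trm"
  | Times "'v trm" "'v trm"

datatype 'v fml =
    Geq "'v trm" "'v trm"
  | Not "'v fml"
  | And "'v fml" "'v fml"
  | Forall 'v "'v fml"
  | Box "'v hp" "'v fml"
and 'v hp =
    Assign 'v "'v trm"
  | AssignAny 'v
  | ODE 'v "'v trm" "'v fml"
  | Test "'v fml"
  | Seq "'v hp" "'v hp"
  | Choice "'v hp" "'v hp"
  | Loop "'v hp"

primrec trm_sem :: "'v trm \<Rightarrow> 'v state \<Rightarrow> real" where
  "trm_sem (Var x) \<omega> = \<omega> x"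
| "trm_sem (Const c) \<omega> = c"
| "trm_sem (Neg t) \<omega> = - trm_sem t \<omega>"
| "trm_sem (Plus s t) \<omega> = trm_sem s \<omega> + trm_sem t \<omega>"
| "trm_sem (Times s t) \<omega> = trm_sem s \<omega> * trm_sem t \<omega>"

primrec fml_sem :: "'v fml \<Rightarrow> 'v state set"
and hp_sem :: "'v hp \<Rightarrow> ('v state \<times> 'v state) set" where
  "fml_sem (Geq s t) = {\<omega>. trm_sem s \<omega> \<ge> trm_sem t \<omega>}"
| "fml_sem (Not \<phi>) = - fml_sem \<phi>"
| "fml_sem (And \<phi> \<psi>) = fml_sem \<phi> \<inter> fml_sem \<psi>"
| "fml_sem (Forall x \<phi>) = {\<omega>. \<forall>a. fun_upd \<omega> x a \<in> fml_sem \<phi>}"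
| "fml_sem (Box \<alpha> \<phi>) = {\<omega>. \<forall>\<nu>. (\<omega>, \<nu>) \<in> hp_sem \<alpha> \<longrightarrow> \<nu> \<in> fml_sem \<phi>}"
| "hp_sem (Assign x \<theta>) = {(\<omega>, \<nu>). \<nu> = fun_upd \<omega> x (trm_sem \<theta> \<omega>)}"
| "hp_sem (AssignAny x) = {(\<omega>, \<nu>). \<exists>a. \<nu> = fun_upd \<omega> x a}"
| "hp_sem (ODE x \<theta> Q) = {(\<omega>, \<nu>). \<exists>r::real. r \<ge> 0 \<and> (\<exists>f :: real \<Rightarrow> 'v state.
      f 0 = \<omega> \<and> f r = \<nu> \<and>
      (\<forall>t\<in>{0..r}. \<forall>y. y \<noteq> x \<longrightarrow> f t y = \<omega> y) \<and>
      (\<forall>t\<in>{0..r}. ((\<lambda>\<tau>. f \<tau> x) has_real_derivative trm_sem \<theta> (f t)) (at t within {0..r})) \<and>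
      (\<forall>t\<in>{0..r}. f t \<in> fml_sem Q))}"
| "hp_sem (Test \<phi>) = {(\<omega>, \<nu>). \<omega> = \<nu> \<and> \<omega> \<in> fml_sem \<phi>}"
| "hp_sem (Seq \<alpha> \<beta>) = hp_sem \<alpha> O hp_sem \<beta>"
| "hp_sem (Choice \<alpha> \<beta>) = hp_sem \<alpha> \<union> hp_sem \<beta>"
| "hp_sem (Loop \<alpha>) = (hp_sem \<alpha>)\<^sup>*"

definition SP :: "'v hp \<Rightarrow> 'v fml \<Rightarrow> 'v state set" where
  "SP \<alpha> \<phi> = {\<nu>. \<exists>\<omega> \<in> fml_sem \<phi>. (\<omega>, \<nu>) \<in> hp_sem \<alpha>}"

primrec trm_vars :: "'v trm \<Rightarrow> 'v set" where
  "trm_vars (Var x) = {x}"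
| "trm_vars (Const c) = {}"
| "trm_vars (Neg t) = trm_vars t"
| "trm_vars (Plus s t) = trm_vars s \<union> trm_vars t"
| "trm_vars (Times s t) = trm_vars s \<union> trm_vars t"

primrec fml_vars :: "'v fml \<Rightarrow> 'v set"
and VAR :: "'v hp \<Rightarrow> 'v set" where
  "fml_vars (Geq s t) = trm_vars s \<union> trm_vars t"
| "fml_vars (Not \<phi>) = fml_vars \<phi>"
| "fml_vars (And \<phi> \<psi>) = fml_vars \<phi> \<union> fml_vars \<psi>"
| "fml_vars (Forall x \<phi>) = insert x (fml_vars \<phi>)"
| "fml_vars (Box \<alpha> \<phi>) = VAR \<alpha> \<union> fml_vars \<phi>"
| "VAR (Assign x \<theta>) = insert x (trm_vars \<theta>)"
| "VAR (AssignAny x) = {x}"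
| "VAR (ODE x \<theta> Q) = insert x (trm_vars \<theta> \<union> fml_vars Q)"
| "VAR (Test \<phi>) = fml_vars \<phi>"
| "VAR (Seq \<alpha> \<beta>) = VAR \<alpha> \<union> VAR \<beta>"
| "VAR (Choice \<alpha> \<beta>) = VAR \<alpha> \<union> VAR \<beta>"
| "VAR (Loop \<alpha>) = VAR \<alpha>"

definition d :: "('v::finite) state \<Rightarrow> 'v state \<Rightarrow> real" where
  "d \<omega> \<nu> = sqrt (\<Sum>x\<in>UNIV. (\<omega> x - \<nu> x)\<^sup>2)"

definition Dist :: "('v::finite) state \<Rightarrow> 'v state set \<Rightarrow> ereal" where
  "Dist \<omega> X = (if \<omega> \<in> X then Inf {ereal (d \<omega> \<nu>) | \<nu>. \<nu> \<notin> X}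
                 else - Inf {ereal (d \<omega> \<nu>) | \<nu>. \<nu> \<in> X})"

definition forward_safe :: "real \<Rightarrow> ('v::finite) hp \<Rightarrow> 'v fml \<Rightarrow> 'v fml \<Rightarrow> bool" where
  "forward_safe r \<alpha> \<phi>pre \<phi>post \<longleftrightarrow>
     ereal r = Inf {Dist \<nu> (fml_sem \<phi>post) | \<nu>. \<nu> \<in> SP \<alpha> \<phi>pre}"

text \<open>phys maps each sensor variable q_s to its physical variable q_p.
  Modelling convention: every assignment to a sensor variable is a sensor read q_s := q_p.\<close>
primrec sensor_reads :: "('v \<Rightarrow> 'v) \<Rightarrow> 'v set \<Rightarrow> 'v hp \<Rightarrow> bool" where
  "sensor_reads phys S (Assign x \<theta>) = (x \<in> S \<longrightarrow> \<theta> = Var (phys x))"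
| "sensor_reads phys S (AssignAny x) = True"
| "sensor_reads phys S (ODE x \<theta> Q) = True"
| "sensor_reads phys S (Test \<phi>) = True"
| "sensor_reads phys S (Seq \<alpha> \<beta>) = (sensor_reads phys S \<alpha> \<and> sensor_reads phys S \<beta>)"
| "sensor_reads phys S (Choice \<alpha> \<beta>) = (sensor_reads phys S \<alpha> \<and> sensor_reads phys S \<beta>)"
| "sensor_reads phys S (Loop \<alpha>) = sensor_reads phys S \<alpha>"

primrec attack :: "('v \<Rightarrow> 'v) \<Rightarrow> 'v set \<Rightarrow> ('v \<Rightarrow> real) \<Rightarrow> 'v hp \<Rightarrow> 'v hp" where
  "attack phys S off (Assign x \<theta>) =
     (if x \<in> S then
        Seq (AssignAny x)
            (Test (And (Geq (Var x) (Plus (Var (phys x)) (Neg (Const (off x)))))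
                       (Geq (Plus (Var (phys x)) (Const (off x))) (Var x))))
      else Assign x \<theta>)"
| "attack phys S off (AssignAny x) = AssignAny x"
| "attack phys S off (ODE x \<theta> Q) = ODE x \<theta> Q"
| "attack phys S off (Test \<phi>) = Test \<phi>"
| "attack phys S off (Seq \<alpha> \<beta>) = Seq (attack phys S off \<alpha>) (attack phys S off \<beta>)"
| "attack phys S off (Choice \<alpha> \<beta>) = Choice (attack phys S off \<alpha>) (attack phys S off \<beta>)"
| "attack phys S off (Loop \<alpha>) = Loop (attack phys S off \<alpha>)"

end

theory Submission
  imports Defs
begin

text \<open>A bounded sensor attack only enlarges the transition relation: an exact read
  \<open>q\<^sub>s := q\<^sub>p\<close> is an attacked read with deviation 0, and a larger offset admits more
  readings. Every program constructor is monotone in the relations of its parts, so the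
  set of reachable states \<open>SP\<close> grows with the attack, and the safety margin, an infimum
  over that set, can only shrink.\<close>

lemma hp_sem_attack_read:
  assumes "x \<in> S"
  shows "hp_sem (attack phys S off (Assign x \<theta>)) =
    {(\<omega>, \<nu>). \<exists>a. \<nu> = fun_upd \<omega> x a \<and> (\<bar>\<nu> x - \<nu> (phys x)\<bar> \<le> off x)}"
  using assms by (auto simp: relcomp_unfold abs_le_iff)

lemma hp_sem_attack_mono:
  assumes "\<forall>s\<in>S. o1 s \<le> o2 s"
  shows "hp_sem (attack phys S o1 \<alpha>) \<subseteq> hp_sem (attack phys S o2 \<alpha>)"
proof (induction \<alpha> rule: hp.induct[where ?P1.0 = "\<lambda>_. True"])
  case (Assign x \<theta>)
  show ?case
  proof (cases "x \<in> S")
    case True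
    with assms have "o1 x \<le> o2 x" by blast
    then show ?thesis unfolding hp_sem_attack_read[OF True] by auto
  qed simp
next
  case Seq then show ?case by (auto intro: relcomp_mono[THEN subsetD])
next
  case Loop then show ?case by (simp add: rtrancl_mono)
qed auto

lemma hp_sem_subset_attack:
  assumes "sensor_reads phys S \<alpha>" and "\<forall>s\<in>S. 0 \<le> off s"
  shows "hp_sem \<alpha> \<subseteq> hp_sem (attack phys S off \<alpha>)"
  using assms(1)
proof (induction \<alpha> rule: hp.induct[where ?P1.0 = "\<lambda>_. True"])
  case (Assign x \<theta>)
  show ?case
  proof (cases "x \<in> S")
    case True
    with Assign have "\<theta> = Var (phys x)" by simp
    moreover have "fun_upd \<omega> x (\<omega> (phys x)) (phys x) = \<omega> (phys x)" for \<omega> :: "'a state"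
      by (cases "phys x = x") auto
    moreover from True assms(2) have "0 \<le> off x" by blast
    ultimately show ?thesis unfolding hp_sem_attack_read[OF True] by auto
  qed simp
next
  case Seq then show ?case by (auto intro: relcomp_mono[THEN subsetD])
next
  case Loop then show ?case by (simp add: rtrancl_mono)
qed auto

lemma SP_mono:
  assumes "hp_sem \<alpha> \<subseteq> hp_sem \<beta>"
  shows "SP \<alpha> \<phi> \<subseteq> SP \<beta> \<phi>"
  using assms unfolding SP_def by blast

lemma forward_safe_antimono:
  assumes "SP \<alpha> \<phi>pre \<subseteq> SP \<beta> \<phi>pre"
    and "forward_safe r\<alpha> \<alpha> \<phi>pre \<phi>post" and "forward_safe r\<beta> \<beta> \<phi>pre \<phi>post"
  shows "r\<beta> \<le> r\<alpha>"
proof -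
  from assms(1) have "{Dist \<nu> (fml_sem \<phi>post) | \<nu>. \<nu> \<in> SP \<alpha> \<phi>pre}
      \<subseteq> {Dist \<nu> (fml_sem \<phi>post) | \<nu>. \<nu> \<in> SP \<beta> \<phi>pre}"
    by blast
  then have "ereal r\<beta> \<le> ereal r\<alpha>"
    using assms(2,3) unfolding forward_safe_def by (simp add: Inf_superset_mono)
  then show ?thesis by simp
qed

theorem theorem1:
  fixes \<alpha> :: "('v::finite) hp"
    and S :: "'v set"
    and phys :: "'v \<Rightarrow> 'v"
    and o1 o2 :: "'v \<Rightarrow> real"
    and r r1 r2 :: real
    and \<phi>pre \<phi>post :: "'v fml"
  assumes "S \<subseteq> VAR \<alpha>"
    and "sensor_reads phys S \<alpha>"
    and "\<forall>s\<in>S. 0 \<le> o1 s"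
    and "\<forall>s\<in>S. 0 \<le> o2 s"
    and "\<forall>s\<in>S. o1 s \<le> o2 s"
    and "forward_safe r \<alpha> \<phi>pre \<phi>post"
    and "forward_safe r1 (attack phys S o1 \<alpha>) \<phi>pre \<phi>post"
    and "forward_safe r2 (attack phys S o2 \<alpha>) \<phi>pre \<phi>post"
  shows "r2 \<le> r1 \<and> r1 \<le> r"
proof
  show "r2 \<le> r1"
    using SP_mono[OF hp_sem_attack_mono[OF assms(5)]] assms(7,8)
    by (rule forward_safe_antimono)
  show "r1 \<le> r"
    using SP_mono[OF hp_sem_subset_attack[OF assms(2,3)]] assms(6,7)
    by (rule forward_safe_antimono)
qed

end
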